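(* Let $V=\{n\in\mathbb{Z} : n\geq 2,\ 5\nmid n\}$ and let $\Gamma_5$ be the directed graph on $V$ with up-edges $(n,(n+5)^2)$ for $n\in V$ and down-edges $(n^2,n)$ for $n\in V$. Then no path in $\Gamma_5$ contains $UUDD$ as a subpath; that is, there do not exist vertices $x,a,z,b,y\in V$ such that $(x,a)$ and $(a,z)$ are up-edges and $(z,b)$ and $(b,y)$ are down-edges (equivalently, $a=(x+5)^2$, $z=(a+5)^2$, $z=b^2$, $b=y^2$).
   Context: Each edge of a path is labelled $U$ if it is an up-edge and $D$ if it is a down-edge; a path contains $UUDD$ as a subpath if it has four consecutive edges labelled $U,U,D,D$. *)

theory Defs
  imports Main
begin

definition V5 :: "int set" where
  "V5 = {n. n \<ge> 2 \<and> \<not> (5 dvd n)}"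

definition up_edge5 :: "int \<Rightarrow> int \<Rightarrow> bool" where
  "up_edge5 u v \<longleftrightarrow> u \<in> V5 \<and> v = (u + 5)^2"

definition down_edge5 :: "int \<Rightarrow> int \<Rightarrow> bool" where
  "down_edge5 u v \<longleftrightarrow> v \<in> V5 \<and> u = v^2"

end

theory Submission
  imports Defs
begin

text \<open>In a path x \<rightarrow> a \<rightarrow> z \<rightarrow> b \<rightarrow> y of shape UUDD the middle vertex is
  z = (a + 5)^2 = b^2, so b = a + 5 and hence y^2 = b = (x + 5)^2 + 5.
  Since x + 5 \<ge> 7, the number (x + 5)^2 + 5 lies strictly between two consecutive
  squares and cannot be a square.\<close>

lemma square_ge_next_square:
  fixes c y :: int
  assumes "0 \<le> c" and "c\<^sup>2 < y\<^sup>2"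
  shows "(c + 1)\<^sup>2 \<le> y\<^sup>2"
proof -
  have "c < \<bar>y\<bar>"
    using assms power2_abs[of y] by (metis abs_ge_zero power_less_imp_less_base)
  then have "(c + 1)\<^sup>2 \<le> \<bar>y\<bar>\<^sup>2"
    using assms(1) by (intro power_mono) auto
  then show ?thesis by simp
qed

lemma square_plus_not_square:
  fixes c k y :: int
  assumes "0 \<le> c" and "0 < k" and "k \<le> 2 * c"
  shows "y\<^sup>2 \<noteq> c\<^sup>2 + k"
proof
  assume y: "y\<^sup>2 = c\<^sup>2 + k"
  then have "(c + 1)\<^sup>2 \<le> c\<^sup>2 + k"
    using assms square_ge_next_square[of c y] by simp
  then show False
    using assms by (simp add: power2_sum)
qed

lemma UUDD_path_equation:
  assumes "up_edge5 x a" and "up_edge5 a z" and "down_edge5 z b" and "down_edge5 b y"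
  shows "y\<^sup>2 = (x + 5)\<^sup>2 + 5"
proof -
  have a: "a \<in> V5" and b: "b \<in> V5"
    using assms by (auto simp: up_edge5_def down_edge5_def)
  have "(a + 5)\<^sup>2 = b\<^sup>2"
    using assms(2,3) by (simp add: up_edge5_def down_edge5_def)
  then have "b = a + 5"
    using a b by (auto simp: V5_def power2_eq_iff_nonneg)
  then show ?thesis
    using assms(1,4) by (simp add: up_edge5_def down_edge5_def)
qed

theorem theorem7:
  shows "\<not> (\<exists>x a z b y. x \<in> V5 \<and> a \<in> V5 \<and> z \<in> V5 \<and> b \<in> V5 \<and> y \<in> V5 \<and>
            up_edge5 x a \<and> up_edge5 a z \<and> down_edge5 z b \<and> down_edge5 b y)"
proof
  assume "\<exists>x a z b y. x \<in> V5 \<and> a \<in> V5 \<and> z \<in> V5 \<and> b \<in> V5 \<and> y \<in> V5 \<and>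
            up_edge5 x a \<and> up_edge5 a z \<and> down_edge5 z b \<and> down_edge5 b y"
  then obtain x a z b y where "x \<in> V5"
    and "up_edge5 x a" "up_edge5 a z" "down_edge5 z b" "down_edge5 b y"
    by blast
  then have "y\<^sup>2 = (x + 5)\<^sup>2 + 5" and "x \<ge> 2"
    by (auto simp: UUDD_path_equation V5_def)
  then show False
    using square_plus_not_square[of "x + 5" 5 y] by simp
qed

end
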